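(* Let $\phi(a)=(1-a)^2$ and assume $\Omega$ is differentiable, so that $R_\phi$ and each $R^{\mathrm{semi}}_\phi(\cdot,\mathbf{q})$ are convex and differentiable; let $\mathbf{w}_{\mathrm{sup}}$ be a minimizer of $R_\phi$. Then: (a) For $\mathbf{q}\in[0,1]^U$, $\mathbf{w}_{\mathrm{sup}}$ minimizes $R^{\mathrm{semi}}_\phi(\cdot,\mathbf{q})$ if and only if $\mathbf{X}_{\mathrm{u}}^\top\mathbf{q}=\tfrac12\big(\mathbf{X}_{\mathrm{u}}^\top\mathbf{1}+\mathbf{X}_{\mathrm{u}}^\top\mathbf{X}_{\mathrm{u}}\mathbf{w}_{\mathrm{sup}}\big)$, where $\mathbf{1}\in\mathbb{R}^U$ is the all-ones vector. (b) If $\mathbf{X}_{\mathrm{u}}$ has rank $U$ (so $d\ge U$) and $\mathbf{X}_{\mathrm{u}}\mathbf{w}_{\mathrm{sup}}\notin[-1,1]^U$, then no $\mathbf{q}\in[0,1]^U$ makes $\mathbf{w}_{\mathrm{sup}}$ a minimizer of $R^{\mathrm{semi}}_\phi(\cdot,\mathbf{q})$, i.e. $\mathbf{w}_{\mathrm{sup}}\notin\mathcal{C}_\phi$. (c) If $\|\mathbf{X}_{\mathrm{u}}\mathbf{w}_{\mathrm{sup}}\|_2>\sqrt{U}$, then no $\mathbf{q}\in[0,1]^U$ makes $\mathbf{w}_{\mathrm{sup}}$ a minimizer of $R^{\mathrm{semi}}_\phi(\cdot,\mathbf{q})$, i.e. $\mathbf{w}_{\mathrm{sup}}\notin\mathc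al{C}_\phi$.
   Context: Fix integers $L,U,d\ge 1$. Let $\mathbf{X}\in\mathbb{R}^{L\times d}$ be a matrix whose rows $\mathbf{x}_1^\top,\dots,\mathbf{x}_L^\top$ are the labeled objects, with labels $\mathbf{y}\in\{-1,+1\}^L$. Let $\mathbf{X}_{\mathrm{u}}\in\mathbb{R}^{U\times d}$ be a matrix whose rows $\mathbf{x}_{\mathrm{u},1}^\top,\dots,\mathbf{x}_{\mathrm{u},U}^\top$ are the unlabeled objects. Let $\phi:\mathbb{R}\to\mathbb{R}$ be a loss function, $\Omega:\mathbb{R}^d\to\mathbb{R}$ a convex function and $\lambda\ge 0$. The supervised risk is $R_\phi(\mathbf{w})=\sum_{i=1}^L\phi(y_i\mathbf{x}_i^\top\mathbf{w})+\lambda\Omega(\mathbf{w})$. For responsibilities $\mathbf{q}\in[0,1]^U$ the semi-supervised risk is $R^{\mathrm{semi}}_\phi(\mathbf{w},\mathbf{q})=R_\phi(\mathbf{w})+\sum_{j=1}^U\big[q_j\phi(\mathbf{x}_{\mathrm{u},j}^\top\mathbf{w})+(1-q_j)\phi(-\mathbf{x}_{\mathrm{u},j}^\top\mathbf{w})\big]$. The constraint set is $\mathcal{C}_\phi=\{\mathbf{w}\in\mathbb{R}^d:\ \exists\,\mathbf{q}\in[0,1]^U \text{ such that } \mathbf{w} \text{ minimizes } R^{\mathrm{semi}}_\phi(\cdot,\mathbf{q})\}$. *)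

theory Defs
  imports "HOL-Analysis.Analysis"
begin

definition sq_loss :: "real \<Rightarrow> real" where
  "sq_loss a = (1 - a)^2"

definition sup_risk ::
  "(real \<Rightarrow> real) \<Rightarrow> real^'d^'l \<Rightarrow> real^'l \<Rightarrow> real \<Rightarrow> (real^'d \<Rightarrow> real) \<Rightarrow> real^'d \<Rightarrow> real" where
  "sup_risk \<phi> X y lam \<Omega> w = (\<Sum>i\<in>UNIV. \<phi> (y $ i * ((X $ i) \<bullet> w))) + lam * \<Omega> w"

definition semi_risk ::
  "(real \<Rightarrow> real) \<Rightarrow> real^'d^'l \<Rightarrow> real^'l \<Rightarrow> real \<Rightarrow> (real^'d \<Rightarrow> real) \<Rightarrow> real^'d^'u
    \<Rightarrow> real^'d \<Rightarrow> real^'u \<Rightarrow> real" where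
  "semi_risk \<phi> X y lam \<Omega> Xu w q = sup_risk \<phi> X y lam \<Omega> w
     + (\<Sum>j\<in>UNIV. q $ j * \<phi> ((Xu $ j) \<bullet> w) + (1 - q $ j) * \<phi> (- ((Xu $ j) \<bullet> w)))"

definition is_minimizer :: "('a \<Rightarrow> real) \<Rightarrow> 'a \<Rightarrow> bool" where
  "is_minimizer f w \<longleftrightarrow> (\<forall>v. f w \<le> f v)"

definition unit_box :: "(real^'u) set" where
  "unit_box = {q. \<forall>j. 0 \<le> q $ j \<and> q $ j \<le> 1}"

definition constraint_set ::
  "(real \<Rightarrow> real) \<Rightarrow> real^'d^'l \<Rightarrow> real^'l \<Rightarrow> real \<Rightarrow> (real^'d \<Rightarrow> real) \<Rightarrow> real^'d^'u
    \<Rightarrow> (real^'d) set" where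
  "constraint_set \<phi> X y lam \<Omega> Xu =
     {w. \<exists>q\<in>(unit_box :: (real^'u) set). is_minimizer (\<lambda>v. semi_risk \<phi> X y lam \<Omega> Xu v q) w}"

end

theory Submission imports Defs begin

text \<open>
For the square loss the unlabelled part of the semi-supervised risk is, up to a term independent
of \<open>w\<close>, the least-squares error \<open>\<parallel>Xu w - t\<parallel>\<^sup>2\<close> against the soft labels \<open>t = 2q - 1 \<in> [-1,1]\<^sup>U\<close>.
Since \<open>wsup\<close> is a critical point of the supervised risk, it minimizes the semi-supervised risk
exactly when it is a critical point of this quadratic, i.e. when it solves the normal equations
\<open>Xu\<^sup>T (Xu wsup - t) = 0\<close>; rewritten in \<open>q\<close> this is (a). If \<open>Xu\<^sup>T\<close> is injective the normal
equations force \<open>Xu wsup = t \<in> [-1,1]\<^sup>U\<close>, giving (b). In general \<open>Xu wsup\<close> is the orthogonal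
projection of \<open>t\<close> onto the range of \<open>Xu\<close>, so \<open>\<parallel>Xu wsup\<parallel> \<le> \<parallel>t\<parallel> \<le> \<surd>U\<close>, giving (c).
\<close>

lemma least_squares_expansion:
  fixes A :: "real^'n^'m"
  shows "norm (A *v v - t) ^ 2
    = norm (A *v w - t) ^ 2 + norm (A *v (v - w)) ^ 2 + 2 * ((transpose A *v (A *v w - t)) \<bullet> (v - w))"
proof -
  have "A *v v - t = (A *v w - t) + A *v (v - w)"
    by (simp add: matrix_vector_mult_diff_distrib)
  then show ?thesis
    by (simp only: power2_norm_eq_inner inner_add_left inner_add_right transpose_matrix_vector
        dot_lmul_matrix inner_commute[of "A *v (v - w)" "A *v w - t"])
qed

lemma least_squares_has_derivative:
  fixes A :: "real^'n^'m"
  shows "((\<lambda>v. norm (A *v v - t) ^ 2) has_derivative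
           (\<lambda>h. 2 * ((transpose A *v (A *v w - t)) \<bullet> h))) (at w)"
proof -
  have matrix_deriv: "((*v) A has_derivative (*v) A) (at w)"
    by (simp add: bounded_linear_imp_has_derivative)
  have "((\<lambda>v. (A *v v - t) \<bullet> (A *v v - t)) has_derivative
          (\<lambda>h. (A *v w - t) \<bullet> (A *v h) + (A *v h) \<bullet> (A *v w - t))) (at w)"
    by (intro derivative_eq_intros) (use matrix_deriv in auto)
  then show ?thesis
    by (simp add: power2_norm_eq_inner inner_commute[of "A *v _" "A *v w - t"] dot_lmul_matrix)
qed

lemma is_minimizer_add_least_squares_iff:
  fixes A :: "real^'n^'m"
  assumes f_min: "is_minimizer f w" and f_diff: "f differentiable at w"
  shows "is_minimizer (\<lambda>v. f v + norm (A *v v - t) ^ 2) w \<longleftrightarrow> transpose A *v (A *v w - t) = 0"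
proof
  let ?c = "transpose A *v (A *v w - t)"
  obtain Df where Df: "(f has_derivative Df) (at w)"
    using f_diff by (auto simp: differentiable_def)
  have Df_zero: "Df = (\<lambda>h. 0)"
    by (rule has_derivative_local_min[OF Df]) (use f_min in \<open>auto simp: is_minimizer_def\<close>)
  assume "is_minimizer (\<lambda>v. f v + norm (A *v v - t) ^ 2) w"
  then have "(\<lambda>h. Df h + 2 * (?c \<bullet> h)) = (\<lambda>h. 0)"
    by (intro has_derivative_local_min[OF has_derivative_add[OF Df least_squares_has_derivative]])
       (auto simp: is_minimizer_def)
  from fun_cong[OF this, of ?c] show "?c = 0"
    by (simp add: Df_zero)
next
  assume "transpose A *v (A *v w - t) = 0"
  then have "norm (A *v w - t) ^ 2 \<le> norm (A *v v - t) ^ 2" for v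
    using least_squares_expansion[of A v t w] by simp
  then show "is_minimizer (\<lambda>v. f v + norm (A *v v - t) ^ 2) w"
    using f_min by (auto simp: is_minimizer_def intro: add_mono)
qed

lemma normal_equations_full_rank:
  fixes A :: "real^'n^'m"
  assumes "rank A = CARD('m)" and "transpose A *v (A *v w - t) = 0"
  shows "A *v w = t"
proof -
  have "inj ((*v) (transpose A))"
    using assms(1) by (simp add: full_rank_injective[symmetric] rank_transpose)
  then have "A *v w - t = 0"
    using assms(2) by (metis injD matrix_vector_mult_0_right)
  then show ?thesis
    by simp
qed

text \<open>The fitted values are the orthogonal projection of \<open>t\<close> onto the range of \<open>A\<close>.\<close>

lemma normal_equations_norm_le:
  fixes A :: "real^'n^'m"
  assumes "transpose A *v (A *v w - t) = 0"
  shows "norm (A *v w) \<le> norm t"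
proof -
  have "(A *v w - t) \<bullet> (A *v w) = 0"
    using assms by (simp flip: dot_lmul_matrix)
  then have "norm (A *v w) ^ 2 = t \<bullet> (A *v w)"
    by (simp add: power2_norm_eq_inner inner_diff_left)
  also have "\<dots> \<le> norm t * norm (A *v w)"
    using Cauchy_Schwarz_ineq2 by (rule abs_le_D1)
  finally show ?thesis
    by (cases "A *v w = 0") (auto simp: power2_eq_square)
qed

lemma power2_norm_vec:
  fixes v :: "real^'n"
  shows "norm v ^ 2 = (\<Sum>j\<in>UNIV. (v $ j) ^ 2)"
  by (simp add: norm_vec_def L2_set_def sum_nonneg)

lemma norm_le_sqrt_card_if_abs_le_1:
  fixes v :: "real^'n"
  assumes "\<And>j. \<bar>v $ j\<bar> \<le> 1"
  shows "norm v \<le> sqrt (real CARD('n))"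
proof -
  have "norm v ^ 2 = (\<Sum>j\<in>UNIV. (v $ j) ^ 2)"
    by (rule power2_norm_vec)
  also have "\<dots> \<le> (\<Sum>j\<in>(UNIV::'n set). 1)"
    using assms by (intro sum_mono) (simp add: abs_square_le_1)
  finally show ?thesis
    by (simp add: real_le_rsqrt)
qed

definition soft_labels :: "real^'u \<Rightarrow> real^'u" where
  "soft_labels q = 2 *\<^sub>R q - (\<chi> j. 1)"

lemma soft_labels_in_box:
  assumes "q \<in> unit_box"
  shows "\<bar>soft_labels q $ j\<bar> \<le> 1"
proof -
  have "0 \<le> q $ j" "q $ j \<le> 1"
    using assms by (auto simp: unit_box_def)
  then show ?thesis
    by (simp add: soft_labels_def abs_le_iff)
qed

lemma semi_risk_sq_loss:
  "semi_risk sq_loss X y lam \<Omega> Xu w q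
     = sup_risk sq_loss X y lam \<Omega> w + norm (Xu *v w - soft_labels q) ^ 2
       + (\<Sum>j\<in>UNIV. 1 - (soft_labels q $ j) ^ 2)"
proof -
  have "q $ j * sq_loss ((Xu $ j) \<bullet> w) + (1 - q $ j) * sq_loss (- ((Xu $ j) \<bullet> w))
      = ((Xu *v w - soft_labels q) $ j) ^ 2 + (1 - (soft_labels q $ j) ^ 2)" for j
    by (simp add: sq_loss_def soft_labels_def matrix_vector_mul_component power2_eq_square
        algebra_simps)
  then show ?thesis
    by (simp add: semi_risk_def power2_norm_vec sum.distrib)
qed

lemma sup_risk_sq_loss_differentiable:
  assumes "\<Omega> differentiable at w"
  shows "sup_risk sq_loss X y lam \<Omega> differentiable at w"
  using assms unfolding sup_risk_def sq_loss_def by (auto intro!: derivative_intros)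

lemma semi_risk_minimizer_iff_normal_equations:
  assumes "\<Omega> differentiable at wsup" and "is_minimizer (sup_risk sq_loss X y lam \<Omega>) wsup"
  shows "is_minimizer (\<lambda>w. semi_risk sq_loss X y lam \<Omega> Xu w q) wsup
     \<longleftrightarrow> transpose Xu *v (Xu *v wsup - soft_labels q) = 0"
proof -
  have "is_minimizer (\<lambda>w. semi_risk sq_loss X y lam \<Omega> Xu w q) wsup
    \<longleftrightarrow> is_minimizer (\<lambda>w. sup_risk sq_loss X y lam \<Omega> w + norm (Xu *v w - soft_labels q) ^ 2) wsup"
    by (simp add: is_minimizer_def semi_risk_sq_loss)
  then show ?thesis
    using is_minimizer_add_least_squares_iff assms sup_risk_sq_loss_differentiable by blast
qed

lemma normal_equations_soft_labels_iff:
  "transpose Xu *v (Xu *v w - soft_labels q) = 0 \<longleftrightarrow>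
   transpose Xu *v q = (1/2) *\<^sub>R (transpose Xu *v (\<chi> j. 1) + transpose Xu *v (Xu *v w))"
proof -
  have "transpose Xu *v (Xu *v w - soft_labels q)
      = (transpose Xu *v (\<chi> j. 1) + transpose Xu *v (Xu *v w)) - 2 *\<^sub>R (transpose Xu *v q)"
    by (simp add: soft_labels_def matrix_vector_mult_diff_distrib matrix_vector_right_distrib
        matrix_vector_mult_scaleR del: transpose_matrix_vector)
  then show ?thesis
    by (auto simp: vec_eq_iff field_simps simp del: transpose_matrix_vector)
qed

theorem mainTheorem8:
  fixes X :: "real^'d^'l" and y :: "real^'l" and Xu :: "real^'d^'u"
    and \<Omega> :: "real^'d \<Rightarrow> real" and lam :: real and wsup :: "real^'d"
  assumes labels: "\<forall>i. y $ i \<in> {-1, 1}"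
    and lam_nonneg: "lam \<ge> 0"
    and Omega_convex: "convex_on UNIV \<Omega>"
    and Omega_diff: "\<forall>w. \<Omega> differentiable (at w)"
    and wsup_min: "is_minimizer (sup_risk sq_loss X y lam \<Omega>) wsup"
  shows
    "(\<forall>q\<in>(unit_box :: (real^'u) set).
        is_minimizer (\<lambda>w. semi_risk sq_loss X y lam \<Omega> Xu w q) wsup \<longleftrightarrow>
        transpose Xu *v q
          = (1/2) *\<^sub>R (transpose Xu *v (\<chi> j. 1) + transpose Xu *v (Xu *v wsup)))
   \<and> ((rank Xu = CARD('u) \<and> Xu *v wsup \<notin> {v. \<forall>j. -1 \<le> v $ j \<and> v $ j \<le> 1})
        \<longrightarrow> wsup \<notin> constraint_set sq_loss X y lam \<Omega> Xu)
   \<and> (norm (Xu *v wsup) > sqrt (real CARD('u))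
        \<longrightarrow> wsup \<notin> constraint_set sq_loss X y lam \<Omega> Xu)"
proof -
  note minimizer_iff = semi_risk_minimizer_iff_normal_equations[OF spec[OF Omega_diff] wsup_min]
  have in_constraint_set: "\<exists>q\<in>unit_box. transpose Xu *v (Xu *v wsup - soft_labels q) = 0"
    if "wsup \<in> constraint_set sq_loss X y lam \<Omega> Xu"
    using that by (auto simp: constraint_set_def minimizer_iff simp del: transpose_matrix_vector)
  have "Xu *v wsup \<in> {v. \<forall>j. -1 \<le> v $ j \<and> v $ j \<le> 1}"
    if "rank Xu = CARD('u)" and "wsup \<in> constraint_set sq_loss X y lam \<Omega> Xu"
    using in_constraint_set[OF that(2)] normal_equations_full_rank[OF that(1)] soft_labels_in_box
    by (fastforce simp: abs_le_iff)
  moreover have "norm (Xu *v wsup) \<le> sqrt (real CARD('u))"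
    if "wsup \<in> constraint_set sq_loss X y lam \<Omega> Xu"
    using in_constraint_set[OF that] normal_equations_norm_le norm_le_sqrt_card_if_abs_le_1
      soft_labels_in_box by (metis order_trans)
  moreover have "is_minimizer (\<lambda>w. semi_risk sq_loss X y lam \<Omega> Xu w q) wsup \<longleftrightarrow>
      transpose Xu *v q = (1/2) *\<^sub>R (transpose Xu *v (\<chi> j. 1) + transpose Xu *v (Xu *v wsup))"
    for q
    by (simp only: minimizer_iff normal_equations_soft_labels_iff)
  ultimately show ?thesis
    by (meson not_less)
qed

end
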